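(* For any pure $n$-qubit state $\psi$ and any $0<\tau\le1$, $F_\psi(\tau)\le 2^{M_0(\psi)}\tau$.
   Context: Pauli strings $P_x$, $x\in\{0,1\}^{2n}$, are the $n$-qubit Hermitian Pauli strings; $\alpha_\psi(x)=\mathrm{tr}(\psi P_x)$; the Pauli distribution is $p_\psi(x)=\alpha_\psi(x)^2/2^n$. The CDF is $F_\psi(\tau)=\sum_{x:\,\alpha_\psi(x)^2<\tau}p_\psi(x)$. $M_0(\psi)=\log_2|\{x:\alpha_\psi(x)\neq0\}|-n$. *)

theory Defs
  imports "Jordan_Normal_Form.Matrix" Complex_Main
begin

definition mtrace :: "complex mat \<Rightarrow> complex" where
  "mtrace A = (\<Sum>i<dim_row A. A $$ (i, i))"

definition kron :: "complex mat \<Rightarrow> complex mat \<Rightarrow> complex mat" where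
  "kron A B = mat (dim_row A * dim_row B) (dim_col A * dim_col B)
     (\<lambda>(i, j). A $$ (i div dim_row B, j div dim_col B) * B $$ (i mod dim_row B, j mod dim_col B))"

definition pauli_I :: "complex mat" where
  "pauli_I = mat 2 2 (\<lambda>(i, j). if i = j then 1 else 0)"
definition pauli_X :: "complex mat" where
  "pauli_X = mat 2 2 (\<lambda>(i, j). if i \<noteq> j then 1 else 0)"
definition pauli_Z :: "complex mat" where
  "pauli_Z = mat 2 2 (\<lambda>(i, j). if i = j then (if i = 0 then 1 else -1) else 0)"

text \<open>Hermitian single-qubit Pauli \<open>i^(ab) X^a Z^b\<close> for bits a, b
  (giving I, Z, X, Y = iXZ).\<close>
definition pauli1 :: "bool \<Rightarrow> bool \<Rightarrow> complex mat" where
  "pauli1 a b = smult_mat (if a \<and> b then \<i> else 1)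
     ((if a then pauli_X else pauli_I) * (if b then pauli_Z else pauli_I))"

text \<open>Pauli string \<open>P_x\<close> for \<open>x = (a,b) \<in> {0,1}^{2n}\<close>, given as a bool list of
  length 2n: \<open>P_x = \<Otimes>_{j<n} i^(a_j b_j) X^(a_j) Z^(b_j)\<close> with
  \<open>a_j = x!j\<close>, \<open>b_j = x!(n+j)\<close>.\<close>
definition pauli_string :: "nat \<Rightarrow> bool list \<Rightarrow> complex mat" where
  "pauli_string n x = foldr kron (map (\<lambda>j. pauli1 (x ! j) (x ! (n + j))) [0..<n]) (1\<^sub>m 1)"

definition pauli_labels :: "nat \<Rightarrow> bool list set" where
  "pauli_labels n = {x. length x = 2 * n}"

definition is_unit_state :: "nat \<Rightarrow> complex vec \<Rightarrow> bool" where
  "is_unit_state n v \<longleftrightarrow> dim_vec v = 2 ^ n \<and> (\<Sum>i<2 ^ n. (cmod (v $ i))\<^sup>2) = 1"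

definition proj :: "complex vec \<Rightarrow> complex mat" where
  "proj v = mat (dim_vec v) (dim_vec v) (\<lambda>(i, j). v $ i * cnj (v $ j))"

text \<open>\<open>\<alpha>_\<psi>(x) = tr(\<psi> P_x)\<close>; it is real since \<psi> and P_x are Hermitian, so we
  take its real part.\<close>
definition alpha :: "nat \<Rightarrow> complex mat \<Rightarrow> bool list \<Rightarrow> real" where
  "alpha n \<psi> x = Re (mtrace (\<psi> * pauli_string n x))"

definition pauli_dist :: "nat \<Rightarrow> complex mat \<Rightarrow> bool list \<Rightarrow> real" where
  "pauli_dist n \<psi> x = (alpha n \<psi> x)\<^sup>2 / 2 ^ n"

definition pauli_cdf :: "nat \<Rightarrow> complex mat \<Rightarrow> real \<Rightarrow> real" where
  "pauli_cdf n \<psi> \<tau> = (\<Sum>x\<in>{x \<in> pauli_labels n. (alpha n \<psi> x)\<^sup>2 < \<tau>}. pauli_dist n \<psi> x)"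

definition stab_M0 :: "nat \<Rightarrow> complex mat \<Rightarrow> real" where
  "stab_M0 n \<psi> = log 2 (real (card {x \<in> pauli_labels n. alpha n \<psi> x \<noteq> 0})) - real n"

end

theory Submission
  imports Defs
begin

text \<open>Every Pauli weight counted by \<open>F_\<psi>(\<tau>)\<close> is below \<open>\<tau>/2^n\<close>, and only labels in the
  support of \<open>\<alpha>_\<psi>\<close> contribute, of which there are \<open>2^(M_0(\<psi>) + n)\<close>.\<close>

lemma finite_pauli_labels: "finite (pauli_labels n)"
proof -
  have "pauli_labels n = {xs. set xs \<subseteq> UNIV \<and> length xs = 2 * n}"
    by (auto simp: pauli_labels_def)
  then show ?thesis
    using finite_lists_length_eq[of "UNIV :: bool set" "2 * n"] by simp
qed

lemma sum_squares_below_le_card_support: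
  fixes f :: "'a \<Rightarrow> real"
  assumes "finite A" and "0 \<le> \<tau>"
  shows "(\<Sum>x\<in>{x \<in> A. (f x)\<^sup>2 < \<tau>}. (f x)\<^sup>2) \<le> real (card {x \<in> A. f x \<noteq> 0}) * \<tau>"
proof -
  let ?T = "{x \<in> A. (f x)\<^sup>2 < \<tau>}" and ?S = "{x \<in> A. f x \<noteq> 0}"
  have "(\<Sum>x\<in>?T. (f x)\<^sup>2) = (\<Sum>x\<in>?T \<inter> ?S. (f x)\<^sup>2)"
    by (rule sum.mono_neutral_right) (use assms(1) in auto)
  also have "\<dots> \<le> (\<Sum>x\<in>?T \<inter> ?S. \<tau>)"
    by (rule sum_mono) auto
  also have "\<dots> = real (card (?T \<inter> ?S)) * \<tau>"
    by simp
  also have "\<dots> \<le> real (card ?S) * \<tau>"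
    using assms by (intro mult_right_mono) (auto intro: card_mono)
  finally show ?thesis .
qed

definition pauli_support :: "nat \<Rightarrow> complex mat \<Rightarrow> bool list set" where
  "pauli_support n \<psi> = {x \<in> pauli_labels n. alpha n \<psi> x \<noteq> 0}"

lemma pauli_cdf_le_card_support:
  assumes "0 \<le> \<tau>"
  shows "pauli_cdf n \<psi> \<tau> \<le> real (card (pauli_support n \<psi>)) * \<tau> / 2 ^ n"
proof -
  have "pauli_cdf n \<psi> \<tau> =
      (\<Sum>x\<in>{x \<in> pauli_labels n. (alpha n \<psi> x)\<^sup>2 < \<tau>}. (alpha n \<psi> x)\<^sup>2) / 2 ^ n"
    by (simp add: pauli_cdf_def pauli_dist_def sum_divide_distrib)
  also have "\<dots> \<le> real (card (pauli_support n \<psi>)) * \<tau> / 2 ^ n"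
    unfolding pauli_support_def
    by (intro divide_right_mono sum_squares_below_le_card_support finite_pauli_labels assms) simp
  finally show ?thesis .
qed

text \<open>Since \<open>log 2 0 = 0\<close>, this is an equation only for nonempty support.\<close>

lemma card_support_le_powr_stab_M0:
  "real (card (pauli_support n \<psi>)) / 2 ^ n \<le> 2 powr stab_M0 n \<psi>"
proof (cases "card (pauli_support n \<psi>) = 0")
  case True
  then show ?thesis by simp
next
  case False
  have "2 powr stab_M0 n \<psi> = 2 powr log 2 (real (card (pauli_support n \<psi>))) / 2 powr real n"
    by (simp add: stab_M0_def pauli_support_def powr_diff)
  also have "\<dots> = real (card (pauli_support n \<psi>)) / 2 ^ n"
    using False by (simp add: powr_realpow)
  finally show ?thesis by simp
qed

theorem lemma2:
  fixes n :: nat and v :: "complex vec" and \<tau> :: real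
  assumes "is_unit_state n v"
    and "0 < \<tau>" and "\<tau> \<le> 1"
  shows "pauli_cdf n (proj v) \<tau> \<le> 2 powr (stab_M0 n (proj v)) * \<tau>"
proof -
  have "pauli_cdf n (proj v) \<tau> \<le> real (card (pauli_support n (proj v))) / 2 ^ n * \<tau>"
    using pauli_cdf_le_card_support[of \<tau> n "proj v"] assms(2) by simp
  also have "\<dots> \<le> 2 powr (stab_M0 n (proj v)) * \<tau>"
    using assms(2) by (intro mult_right_mono card_support_le_powr_stab_M0) simp
  finally show ?thesis .
qed

end
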